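(* Let $\pi$ be a finitely refining sequence of partitions of $[0,1]$ and $x\in C^0([0,1],\mathbb R)$. Define for all $m\ge0$, $0\le k\le N(\pi^{m+1})-N(\pi^m)-1$, writing $t_j=t^{m,k}_j$, $$\theta_{m,k}=\frac{(x(t_2)-x(t_1))(t_3-t_2)-(x(t_3)-x(t_2))(t_2-t_1)}{\sqrt{(t_2-t_1)(t_3-t_2)(t_3-t_1)}}.$$ Then $$x(t)=x(0)+(x(1)-x(0))t+\sum_{m=0}^{\infty}\sum_{k=0}^{N(\pi^{m+1})-N(\pi^m)-1}\theta_{m,k}e^\pi_{m,k}(t),$$ where the partial sums over $m\le N-1$ converge to $x$ uniformly on $[0,1]$ as $N\to\infty$. Moreover this representation is unique: if $x(t)=x(0)+(x(1)-x(0))t+\sum_m\sum_k\theta'_{m,k}e^\pi_{m,k}(t)$ for all $t$ with real coefficients $\theta'_{m,k}$, then $\theta'_{m,k}=\theta_{m,k}$ for all $m,k$.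
   Context: A partition of $[0,1]$ is a finite set $\{0=t_0<t_1<\dots<t_N=1\}$; for a partition $\pi^n=\{0=t^n_0<\dots<t^n_{N(\pi^n)}=1\}$, $N(\pi^n)$ is its number of intervals, $|\pi^n|=\max_i(t^n_{i+1}-t^n_i)$ and $\underline{\pi^n}=\min_i(t^n_{i+1}-t^n_i)$. A sequence $\pi=(\pi^n)_{n\ge0}$ of partitions of $[0,1]$, with the convention $\pi^0=\{0,1\}$, is finitely refining if $\pi^n\subseteq\pi^{n+1}$ for all $n$, $|\pi^n|\to0$, and there is $M<\infty$ such that for every $n$ each interval $[t^n_i,t^n_{i+1}]$ contains at most $M$ points of $\pi^{n+1}$. Haar and Schauder functions of a finitely refining $\pi$: for each level $m\ge0$ and each interval $[u_0,u_r]$ of $\pi^m$, let $u_0<u_1<\dots<u_r$ be the points of $\pi^{m+1}$ lying in $[u_0,u_r]$. For each $i\in\{2,\dots,r\}$ put $t_1=u_0$, $t_2=u_{i-1}$, $t_3=u_i$ and define $\psi(s)=\sqrt{\frac{t_3-t_2}{(t_2-t_1)(t_3-t_1)}}$ for $s\in[t_1,t_2)$, $\psi(s)=-\sqrt{\frac{t_2-t_1}{(t_3-t_2)(t_3-t_1)}}$ for $s\in[t_2,t_3)$, $\psi(s)=0$ otherwise, and $e(t)=\int_0^t\psi(s)\,ds$ (a continuous hat function vanishing outside $[t_1,t_3]$, affine on $[t_1,t_2]$ and on $[t_2,t_3]$, maximal at $t_2$). Ranging over all intervals of $\pi^m$ and all such $i$ gives $N(\pi^{m+1})-N(\pi^m)$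 functions at level $m$, enumerated in a fixed order as $\psi_{m,k}$, $e^\pi_{m,k}$, $k=0,\dots,N(\pi^{m+1})-N(\pi^m)-1$, with associated points $t^{m,k}_1<t^{m,k}_2<t^{m,k}_3$ (so $[t^{m,k}_1,t^{m,k}_3]$ is the support of $e^\pi_{m,k}$ and $t^{m,k}_2$ its maximum point). The $\psi_{m,k}$ are the Haar functions and the $e^\pi_{m,k}$ the Schauder functions of $\pi$. *)

theory Defs
  imports "HOL-Analysis.Analysis"
begin

definition is_partition :: "real set \<Rightarrow> bool" where
  "is_partition P \<longleftrightarrow> finite P \<and> 0 \<in> P \<and> 1 \<in> P \<and> P \<subseteq> {0..1}"

definition consecutive :: "real set \<Rightarrow> real \<Rightarrow> real \<Rightarrow> bool" where
  "consecutive P a b \<longleftrightarrow> a \<in> P \<and> b \<in> P \<and> a < b \<and> {a<..<b} \<inter> P = {}"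

definition mesh :: "real set \<Rightarrow> real" where
  "mesh P = Max {b - a | a b. consecutive P a b}"

definition num_intervals :: "real set \<Rightarrow> nat" where
  "num_intervals P = card P - 1"

definition finitely_refining :: "(nat \<Rightarrow> real set) \<Rightarrow> bool" where
  "finitely_refining \<pi> \<longleftrightarrow>
     (\<forall>n. is_partition (\<pi> n)) \<and> \<pi> 0 = {0, 1} \<and>
     (\<forall>n. \<pi> n \<subseteq> \<pi> (Suc n)) \<and>
     (\<lambda>n. mesh (\<pi> n)) \<longlonglongrightarrow> 0 \<and>
     (\<exists>M::nat. \<forall>n a b. consecutive (\<pi> n) a b \<longrightarrow> card (\<pi> (Suc n) \<inter> {a..b}) \<le> M)"

definition haar :: "real \<Rightarrow> real \<Rightarrow> real \<Rightarrow> real \<Rightarrow> real" where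
  "haar t1 t2 t3 s =
     (if t1 \<le> s \<and> s < t2 then sqrt ((t3 - t2) / ((t2 - t1) * (t3 - t1)))
      else if t2 \<le> s \<and> s < t3 then - sqrt ((t2 - t1) / ((t3 - t2) * (t3 - t1)))
      else 0)"

definition schauder :: "real \<Rightarrow> real \<Rightarrow> real \<Rightarrow> real \<Rightarrow> real" where
  "schauder t1 t2 t3 t = integral {0..t} (haar t1 t2 t3)"

text \<open>Level-m Haar/Schauder functions are in one-to-one correspondence with the new
  points s of \<pi>(m+1) not in \<pi> m: t2 = s, t1 = left endpoint of the interval of \<pi> m
  containing s, t3 = successor of s in \<pi>(m+1).\<close>
definition pt1 :: "(nat \<Rightarrow> real set) \<Rightarrow> nat \<Rightarrow> real \<Rightarrow> real" where
  "pt1 \<pi> m s = Max {u \<in> \<pi> m. u < s}"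

definition pt3 :: "(nat \<Rightarrow> real set) \<Rightarrow> nat \<Rightarrow> real \<Rightarrow> real" where
  "pt3 \<pi> m s = Min {u \<in> \<pi> (Suc m). s < u}"

definition level_count :: "(nat \<Rightarrow> real set) \<Rightarrow> nat \<Rightarrow> nat" where
  "level_count \<pi> m = num_intervals (\<pi> (Suc m)) - num_intervals (\<pi> m)"

text \<open>With a fixed enumeration enum m : {0..<level_count} \<rightarrow> \<pi>(m+1) - \<pi> m of the level-m
  middle points, the points t^{m,k}_j:\<close>
definition tk1 where "tk1 \<pi> enum m k = pt1 \<pi> m (enum m k)"
definition tk2 where "tk2 (\<pi> :: nat \<Rightarrow> real set) (enum :: nat \<Rightarrow> nat \<Rightarrow> real) m k = enum m k"
definition tk3 where "tk3 \<pi> enum m k = pt3 \<pi> m (enum m k)"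

definition schauder_fun :: "(nat \<Rightarrow> real set) \<Rightarrow> (nat \<Rightarrow> nat \<Rightarrow> real) \<Rightarrow> nat \<Rightarrow> nat \<Rightarrow> real \<Rightarrow> real" where
  "schauder_fun \<pi> enum m k = schauder (tk1 \<pi> enum m k) (tk2 \<pi> enum m k) (tk3 \<pi> enum m k)"

definition theta :: "(real \<Rightarrow> real) \<Rightarrow> (nat \<Rightarrow> real set) \<Rightarrow> (nat \<Rightarrow> nat \<Rightarrow> real) \<Rightarrow> nat \<Rightarrow> nat \<Rightarrow> real" where
  "theta x \<pi> enum m k =
     (let t1 = tk1 \<pi> enum m k; t2 = tk2 \<pi> enum m k; t3 = tk3 \<pi> enum m k in
      ((x t2 - x t1) * (t3 - t2) - (x t3 - x t2) * (t2 - t1)) /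
        sqrt ((t2 - t1) * (t3 - t2) * (t3 - t1)))"

definition schauder_partial ::
  "(real \<Rightarrow> real) \<Rightarrow> (nat \<Rightarrow> real set) \<Rightarrow> (nat \<Rightarrow> nat \<Rightarrow> real) \<Rightarrow> (nat \<Rightarrow> nat \<Rightarrow> real) \<Rightarrow> nat \<Rightarrow> real \<Rightarrow> real" where
  "schauder_partial x \<pi> enum c N t =
     x 0 + (x 1 - x 0) * t + (\<Sum>m<N. \<Sum>k<level_count \<pi> m. c m k * schauder_fun \<pi> enum m k t)"

end

theory Submission
  imports Defs
begin

text \<open>The partial sum of the Schauder expansion over the levels m < N is the piecewise linear
  interpolation of x on \<pi>^N. Indeed, inserting a point s between consecutive points a < c of
  a partition changes the interpolation by the defect of x at s from its chord over [a,c],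
  times the hat function of height 1 at s supported on [a,c]; and \<theta>_{m,k} e_{m,k} is exactly
  this product, with t_1 taken in \<pi>^m and t_3 in \<pi>^(m+1) because the new points of a level
  are inserted from right to left. Uniform convergence follows from uniform continuity of x
  and mesh \<pi>^N \<rightarrow> 0. For uniqueness, Schauder functions of level \<ge> n vanish on \<pi>^n, so any
  expansion converging to x agrees with x on \<pi>^(m+1) after level m; by induction on m the
  difference of the level-m coefficients then solves a triangular homogeneous system.\<close>

definition chord :: "(real \<Rightarrow> real) \<Rightarrow> real \<Rightarrow> real \<Rightarrow> real \<Rightarrow> real" where
  "chord x a c t = x a + (x c - x a) * (t - a) / (c - a)"

text \<open>At a point t of P both Max and Min below are t, and chord x t t t = x t only because
  division by zero yields 0 in HOL.\<close>
definition pl_interp :: "(real \<Rightarrow> real) \<Rightarrow> real set \<Rightarrow> real \<Rightarrow> real" where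
  "pl_interp x P t = chord x (Max {u \<in> P. u \<le> t}) (Min {u \<in> P. t \<le> u}) t"

definition pred_pt :: "real set \<Rightarrow> real \<Rightarrow> real" where
  "pred_pt P s = Max {u \<in> P. u < s}"

definition succ_pt :: "real set \<Rightarrow> real \<Rightarrow> real" where
  "succ_pt P s = Min {u \<in> P. s < u}"

lemma
  assumes "finite P" "u \<in> P" "u < s"
  shows pred_pt_in: "pred_pt P s \<in> P"
    and pred_pt_less: "pred_pt P s < s"
    and pred_pt_greatest: "u \<le> pred_pt P s"
proof -
  have F: "finite {u \<in> P. u < s}" and "{u \<in> P. u < s} \<noteq> {}" using assms by auto
  then have "pred_pt P s \<in> {u \<in> P. u < s}" unfolding pred_pt_def by (rule Max_in)
  then show "pred_pt P s \<in> P" "pred_pt P s < s" by auto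
  show "u \<le> pred_pt P s" unfolding pred_pt_def using F assms by (intro Max_ge) auto
qed

lemma
  assumes "finite P" "u \<in> P" "s < u"
  shows succ_pt_in: "succ_pt P s \<in> P"
    and succ_pt_greater: "s < succ_pt P s"
    and succ_pt_least: "succ_pt P s \<le> u"
proof -
  have F: "finite {u \<in> P. s < u}" and "{u \<in> P. s < u} \<noteq> {}" using assms by auto
  then have "succ_pt P s \<in> {u \<in> P. s < u}" unfolding succ_pt_def by (rule Min_in)
  then show "succ_pt P s \<in> P" "s < succ_pt P s" by auto
  show "succ_pt P s \<le> u" unfolding succ_pt_def using F assms by (intro Min_le) auto
qed

lemma consecutive_around:
  assumes P: "finite P" and l: "l \<in> P" and r: "r \<in> P" "l < r" and t: "t \<in> {l..r}"
  obtains a c where "consecutive P a c" "t \<in> {a..c}"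
proof (cases "t < r")
  case True
  define a where "a = Max {u \<in> P. u \<le> t}"
  have "finite {u \<in> P. u \<le> t}" "l \<in> {u \<in> P. u \<le> t}" using P l t by auto
  then have a: "a \<in> P" "a \<le> t" "\<And>u. u \<in> P \<Longrightarrow> u \<le> t \<Longrightarrow> u \<le> a"
    unfolding a_def using Max_in Max_ge by fastforce+
  have "{a<..<succ_pt P t} \<inter> P = {}"
  proof safe
    fix u assume "u \<in> {a<..<succ_pt P t}" "u \<in> P"
    then show "u \<in> {}" using a(3)[of u] succ_pt_least[OF P, of u t] by force
  qed
  then have "consecutive P a (succ_pt P t)" "t \<in> {a..succ_pt P t}"
    using a succ_pt_in[OF P r(1) True] succ_pt_greater[OF P r(1) True]
    unfolding consecutive_def by auto
  then show ?thesis by (rule that)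
next
  case False
  then have "t = r" using t by simp
  have "{pred_pt P r<..<r} \<inter> P = {}"
  proof safe
    fix u assume "u \<in> {pred_pt P r<..<r}" "u \<in> P"
    then show "u \<in> {}" using pred_pt_greatest[OF P, of u r] by force
  qed
  then have "consecutive P (pred_pt P r) r" "t \<in> {pred_pt P r..r}"
    using pred_pt_in[OF P l r(2)] pred_pt_less[OF P l r(2)] r(1) \<open>t = r\<close>
    unfolding consecutive_def by auto
  then show ?thesis by (rule that)
qed

lemma pl_interp_consecutive:
  assumes P: "finite P" and ac: "consecutive P a c" and t: "t \<in> {a..c}"
  shows "pl_interp x P t = chord x a c t"
proof (cases "t \<in> P")
  case True
  then have "t = a \<or> t = c"
    using ac t unfolding consecutive_def by (smt (verit) atLeastAtMost_iff disjoint_iff greaterThanLessThan_iff)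
  moreover have "Max {u \<in> P. u \<le> t} = t" "Min {u \<in> P. t \<le> u} = t"
    using P True by (auto intro!: Max_eqI Min_eqI)
  ultimately show ?thesis using ac by (auto simp: pl_interp_def chord_def consecutive_def)
next
  case False
  have gap: "u \<le> a \<or> c \<le> u" if "u \<in> P" for u
    using ac that unfolding consecutive_def by (smt (verit) disjoint_iff greaterThanLessThan_iff)
  have "a < t" "t < c" using ac t False unfolding consecutive_def by (auto simp: le_less)
  then have "Max {u \<in> P. u \<le> t} = a" "Min {u \<in> P. t \<le> u} = c"
    using P ac gap unfolding consecutive_def by (auto intro!: Max_eqI Min_eqI dest: gap)
  then show ?thesis by (simp add: pl_interp_def)
qed

lemma pl_interp_in: "finite P \<Longrightarrow> t \<in> P \<Longrightarrow> pl_interp x P t = x t"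
proof -
  assume "finite P" "t \<in> P"
  then have "Max {u \<in> P. u \<le> t} = t" "Min {u \<in> P. t \<le> u} = t" by (auto intro!: Max_eqI Min_eqI)
  then show ?thesis by (simp add: pl_interp_def chord_def)
qed

lemma chord_close:
  assumes t: "t \<in> {a..c}" and "\<bar>x a - x t\<bar> < e" "\<bar>x c - x t\<bar> < e"
  shows "\<bar>chord x a c t - x t\<bar> < e"
proof (cases "a = c")
  case True
  then show ?thesis using assms by (simp add: chord_def)
next
  case False
  define p where "p = (c - t) / (c - a)"
  define q where "q = (t - a) / (c - a)"
  have "a < c" using t False by auto
  then have pq: "p \<ge> 0" "q \<ge> 0" "p + q = 1"
    using t unfolding p_def q_def by (auto simp: add_divide_distrib[symmetric])
  have "chord x a c t - x t = (x a - x t) * p + (x c - x t) * q"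
    using \<open>a < c\<close> unfolding chord_def p_def q_def by (simp add: divide_simps) (simp add: algebra_simps)
  also have "\<bar>\<dots>\<bar> \<le> \<bar>x a - x t\<bar> * p + \<bar>x c - x t\<bar> * q"
    using pq by (simp add: abs_mult order_trans[OF abs_triangle_ineq])
  also have "\<dots> \<le> max \<bar>x a - x t\<bar> \<bar>x c - x t\<bar> * p + max \<bar>x a - x t\<bar> \<bar>x c - x t\<bar> * q"
    using pq by (intro add_mono mult_right_mono) auto
  also have "\<dots> = max \<bar>x a - x t\<bar> \<bar>x c - x t\<bar>"
    using pq by (simp add: distrib_left[symmetric])
  finally show ?thesis using assms by simp
qed

lemma mesh_ge:
  assumes "finite P" "consecutive P a c"
  shows "c - a \<le> mesh P"
proof -
  have "{c - a | a c. consecutive P a c} \<subseteq> (\<lambda>(a, c). c - a) ` (P \<times> P)"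
    unfolding consecutive_def by force
  then have "finite {c - a | a c. consecutive P a c}"
    using assms(1) by (meson finite_SigmaI finite_imageI finite_subset)
  then show ?thesis unfolding mesh_def using assms(2) by (intro Max_ge) auto
qed

lemma uniform_limit_pl_interp:
  assumes part: "\<And>n. is_partition (\<pi> n)" and mesh: "(\<lambda>n. mesh (\<pi> n)) \<longlonglongrightarrow> 0"
    and cont: "continuous_on {0..1} x"
  shows "uniform_limit {0..1} (\<lambda>n. pl_interp x (\<pi> n)) x sequentially"
  unfolding uniform_limit_sequentially_iff
proof (intro allI impI)
  fix e :: real assume "e > 0"
  have "uniformly_continuous_on {0..1} x" using cont by (intro compact_uniformly_continuous) auto
  then obtain d where "d > 0"
    and d: "\<And>u v. u \<in> {0..1} \<Longrightarrow> v \<in> {0..1} \<Longrightarrow> dist v u < d \<Longrightarrow> dist (x v) (x u) < e"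
    unfolding uniformly_continuous_on_def using \<open>e > 0\<close> by metis
  obtain N where N: "\<And>n. n \<ge> N \<Longrightarrow> mesh (\<pi> n) < d"
    using order_tendstoD(2)[OF mesh \<open>d > 0\<close>] unfolding eventually_sequentially by auto
  have "\<bar>pl_interp x (\<pi> n) t - x t\<bar> < e" if "n \<ge> N" "t \<in> {0..1}" for n t
  proof -
    have P: "finite (\<pi> n)" "0 \<in> \<pi> n" "1 \<in> \<pi> n" "\<pi> n \<subseteq> {0..1}"
      using part[of n] unfolding is_partition_def by auto
    obtain a c where ac: "consecutive (\<pi> n) a c" "t \<in> {a..c}"
      using consecutive_around[OF P(1-3) _ \<open>t \<in> {0..1}\<close>] by auto
    have "c - a < d" using mesh_ge[OF P(1) ac(1)] N[OF \<open>n \<ge> N\<close>] by simp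
    moreover have "a \<in> {0..1}" "c \<in> {0..1}" using ac(1) P(4) unfolding consecutive_def by auto
    ultimately have "\<bar>x a - x t\<bar> < e" "\<bar>x c - x t\<bar> < e"
      using d[OF \<open>t \<in> {0..1}\<close>, of a] d[OF \<open>t \<in> {0..1}\<close>, of c] ac(2)
      by (auto simp: dist_real_def)
    then show ?thesis
      using chord_close[OF ac(2)] pl_interp_consecutive[OF P(1) ac] by simp
  qed
  then show "\<exists>N. \<forall>n\<ge>N. \<forall>t\<in>{0..1}. dist (pl_interp x (\<pi> n) t) (x t) < e"
    unfolding dist_real_def by blast
qed

definition hat :: "real \<Rightarrow> real \<Rightarrow> real \<Rightarrow> real \<Rightarrow> real" where
  "hat a s c t =
     (if t \<le> a \<or> c \<le> t then 0 else if t \<le> s then (t - a) / (s - a) else (c - t) / (c - s))"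

lemma chord_refine_left:
  assumes "a < s" "s < c"
  shows "chord x a s t = chord x a c t + (x s - chord x a c s) * ((t - a) / (s - a))"
  using assms unfolding chord_def by (simp add: divide_simps) (simp add: algebra_simps)

lemma chord_refine_right:
  assumes "a < s" "s < c"
  shows "chord x s c t = chord x a c t + (x s - chord x a c s) * ((c - t) / (c - s))"
  using assms unfolding chord_def by (simp add: divide_simps) (simp add: algebra_simps)

lemma pl_interp_insert:
  assumes P: "finite P" and ac: "consecutive P a c" and s: "s \<in> {a<..<c}"
    and t: "t \<in> {l..r}" and lr: "l \<in> P" "r \<in> P"
  shows "pl_interp x (insert s P) t = pl_interp x P t + (x s - chord x a c s) * hat a s c t"
proof -
  have P': "finite (insert s P)" using P by simp
  consider "t \<in> {a..s}" | "t \<in> {s..c}" | "t < a \<or> c < t" using s by force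
  then show ?thesis
  proof cases
    case 1
    have "consecutive (insert s P) a s" using ac s unfolding consecutive_def by (auto simp: disjoint_iff)
    then have "pl_interp x (insert s P) t = chord x a s t" using pl_interp_consecutive[OF P'] 1 by blast
    moreover have "pl_interp x P t = chord x a c t" using pl_interp_consecutive[OF P ac] 1 s by auto
    moreover have "hat a s c t = (t - a) / (s - a)" using 1 s by (auto simp: hat_def)
    ultimately show ?thesis using s chord_refine_left[of a s c x t] by simp
  next
    case 2
    have "consecutive (insert s P) s c" using ac s unfolding consecutive_def by (auto simp: disjoint_iff)
    then have "pl_interp x (insert s P) t = chord x s c t" using pl_interp_consecutive[OF P'] 2 by blast
    moreover have "pl_interp x P t = chord x a c t" using pl_interp_consecutive[OF P ac] 2 s by auto
    moreover have "hat a s c t = (c - t) / (c - s)" using 2 s by (auto simp: hat_def)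
    ultimately show ?thesis using s chord_refine_right[of a s c x t] by simp
  next
    case 3
    have "min l a \<in> P" "max r c \<in> P" "min l a < max r c" "t \<in> {min l a..max r c}"
      using ac lr t unfolding consecutive_def by (auto simp: min_def max_def)
    then obtain a' c' where a'c': "consecutive P a' c'" "t \<in> {a'..c'}"
      by (rule consecutive_around[OF P])
    have "a \<notin> {a'<..<c'}" "c \<notin> {a'<..<c'}" using a'c'(1) ac unfolding consecutive_def by auto
    then have "s \<notin> {a'<..<c'}" using 3 a'c'(2) s by auto
    then have "consecutive (insert s P) a' c'" using a'c'(1) unfolding consecutive_def by auto
    then have "pl_interp x (insert s P) t = pl_interp x P t"
      using pl_interp_consecutive[OF P] pl_interp_consecutive[OF P'] a'c' by metis
    moreover have "hat a s c t = 0" using 3 by (auto simp: hat_def)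
    ultimately show ?thesis by simp
  qed
qed

lemma consecutive_pred_succ:
  assumes R: "finite R" and PQR: "P \<subseteq> Q" "Q \<subseteq> R" and lr: "l \<in> P" "r \<in> P" "R \<subseteq> {l..r}"
    and b: "b \<in> R - Q"
    and below: "\<forall>u\<in>Q. u < b \<longrightarrow> u \<in> P" and above: "\<forall>u\<in>R. b < u \<longrightarrow> u \<in> Q"
  shows "consecutive Q (pred_pt P b) (succ_pt R b)" and "b \<in> {pred_pt P b<..<succ_pt R b}"
proof -
  have P: "finite P" using R PQR by (meson finite_subset)
  have "b \<in> {l..r}" "b \<noteq> l" "b \<noteq> r" using b lr PQR by auto
  then have "l < b" "b < r" by auto
  define a where "a = pred_pt P b"
  define c where "c = succ_pt R b"
  have a: "a \<in> P" "a < b" "\<And>u. u \<in> P \<Longrightarrow> u < b \<Longrightarrow> u \<le> a"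
    using pred_pt_in[OF P lr(1) \<open>l < b\<close>] pred_pt_less[OF P lr(1) \<open>l < b\<close>] pred_pt_greatest[OF P]
    unfolding a_def by auto
  have "r \<in> R" using lr PQR by auto
  then have c: "c \<in> R" "b < c" "\<And>u. u \<in> R \<Longrightarrow> b < u \<Longrightarrow> c \<le> u"
    using succ_pt_in[OF R _ \<open>b < r\<close>] succ_pt_greater[OF R _ \<open>b < r\<close>] succ_pt_least[OF R]
    unfolding c_def by auto
  have "u \<notin> Q" if "a < u" "u < c" for u
  proof
    assume "u \<in> Q"
    consider "u < b" | "u = b" | "b < u" by linarith
    then show False
    proof cases
      case 1
      then show False using \<open>u \<in> Q\<close> below a(3)[of u] \<open>a < u\<close> by auto
    next
      case 2
      then show False using \<open>u \<in> Q\<close> b by simp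
    next
      case 3
      then show False using \<open>u \<in> Q\<close> PQR c(3)[of u] \<open>u < c\<close> by auto
    qed
  qed
  then show "consecutive Q a c" "b \<in> {a<..<c}"
    using a c above PQR unfolding consecutive_def by auto
qed

lemma pl_interp_refine:
  assumes R: "finite R" and PR: "P \<subseteq> R" and lr: "l \<in> P" "r \<in> P" "R \<subseteq> {l..r}"
    and t: "t \<in> {l..r}"
  shows "pl_interp x R t = pl_interp x P t +
    (\<Sum>s\<in>R - P. (x s - chord x (pred_pt P s) (succ_pt R s) s) * hat (pred_pt P s) s (succ_pt R s) t)"
proof -
  let ?T = "\<lambda>s. (x s - chord x (pred_pt P s) (succ_pt R s) s) * hat (pred_pt P s) s (succ_pt R s) t"
  \<comment> \<open>The new points are inserted from right to left: each one then falls between its left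
    neighbour in P and its right neighbour in R.\<close>
  have "A \<subseteq> R - P \<Longrightarrow> (\<forall>s\<in>A. \<forall>s'\<in>R - P. s < s' \<longrightarrow> s' \<in> A) \<Longrightarrow>
      pl_interp x (P \<union> A) t = pl_interp x P t + sum ?T A" if "finite A" for A
    using that
  proof (induction A rule: finite_linorder_min_induct)
    case (insert b A)
    have "\<forall>s\<in>A. \<forall>s'\<in>R - P. s < s' \<longrightarrow> s' \<in> A"
      using insert.prems(2) insert.hyps(2) by fastforce
    then have IH: "pl_interp x (P \<union> A) t = pl_interp x P t + sum ?T A"
      using insert.IH insert.prems(1) by blast
    have b: "b \<in> R - (P \<union> A)" using insert.prems(1) insert.hyps(2) by auto
    have PQR: "P \<subseteq> P \<union> A" "P \<union> A \<subseteq> R" using insert.prems(1) PR by auto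
    have below: "\<forall>u\<in>P \<union> A. u < b \<longrightarrow> u \<in> P" using insert.hyps(2) by auto
    have above: "\<forall>u\<in>R. b < u \<longrightarrow> u \<in> P \<union> A" using insert.prems(2) by auto
    have "finite (P \<union> A)" "l \<in> P \<union> A" "r \<in> P \<union> A" using R PQR(2) lr by (auto intro: finite_subset)
    then have "pl_interp x (insert b (P \<union> A)) t = pl_interp x (P \<union> A) t + ?T b"
      using pl_interp_insert[OF _ consecutive_pred_succ[OF R PQR lr b below above] t] by blast
    then show ?case using IH b insert.hyps by simp
  qed simp
  from this[of "R - P"] show ?thesis using R PR by (simp add: Un_absorb1)
qed

lemma has_integral_Ico_step:
  fixes a b t h :: real
  assumes "0 \<le> a" "a \<le> b" "0 \<le> t"
  shows "((\<lambda>u. if u \<in> {a..<b} then h else 0) has_integral (max a (min t b) - a) * h) {0..t}"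
proof -
  let ?m = "max a (min t b)"
  have "((\<lambda>_. h) has_integral (?m - a) * h) {a..?m}"
    using has_integral_const_real[of h a ?m] by simp
  moreover have "negligible {u \<in> {a..?m} - {a..<b} \<inter> {0..t}. h \<noteq> 0}"
    by (rule negligible_subset[of "{a, ?m}"]) (use assms in auto)
  moreover have "negligible {u \<in> {a..<b} \<inter> {0..t} - {a..?m}. h \<noteq> 0}"
    by (rule negligible_subset[of "{}"]) (use assms in auto)
  ultimately have "((\<lambda>_. h) has_integral (?m - a) * h) ({a..<b} \<inter> {0..t})"
    using has_integral_spike_set_eq[of "{a..?m}" "{a..<b} \<inter> {0..t}" "\<lambda>_. h"] by blast
  then show ?thesis using has_integral_restrict_Int[of "{a..<b}" "\<lambda>_. h"] by simp
qed

lemma div_eq_sqrt_div_square: "0 < p \<Longrightarrow> sqrt q / p = sqrt (q / p\<^sup>2)"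
  by (simp add: real_sqrt_divide)

lemma haar_eq_steps:
  assumes "a < s" "s < c"
  defines "K \<equiv> sqrt ((s - a) * (c - s) / (c - a))"
  shows "haar a s c u =
    (if u \<in> {a..<s} then K / (s - a) else 0) + (if u \<in> {s..<c} then - (K / (c - s)) else 0)"
proof -
  have "(s - a) * (c - s) / (c - a) / (s - a)\<^sup>2 = (c - s) / ((s - a) * (c - a))"
    "(s - a) * (c - s) / (c - a) / (c - s)\<^sup>2 = (s - a) / ((c - s) * (c - a))"
    using assms by (simp_all add: power2_eq_square)
  then have "K / (s - a) = sqrt ((c - s) / ((s - a) * (c - a)))"
    "K / (c - s) = sqrt ((s - a) / ((c - s) * (c - a)))"
    using assms unfolding K_def by (simp_all add: div_eq_sqrt_div_square)
  then show ?thesis using assms by (simp add: haar_def)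
qed

lemma schauder_eq_hat:
  assumes "0 \<le> a" "a < s" "s < c" "0 \<le> t"
  shows "schauder a s c t = sqrt ((s - a) * (c - s) / (c - a)) * hat a s c t"
proof -
  define K where "K = sqrt ((s - a) * (c - s) / (c - a))"
  have "(haar a s c has_integral
      (max a (min t s) - a) * (K / (s - a)) + (max s (min t c) - s) * - (K / (c - s))) {0..t}"
    unfolding haar_eq_steps[OF assms(2,3)] K_def[symmetric]
    by (intro has_integral_add has_integral_Ico_step) (use assms in auto)
  then have "schauder a s c t = (max a (min t s) - a) * (K / (s - a)) - (max s (min t c) - s) * (K / (c - s))"
    unfolding schauder_def by (simp add: integral_unique)
  also have "\<dots> = K * hat a s c t"
  proof -
    consider "t \<le> a" | "a < t" "t \<le> s" | "s < t" "t < c" | "c \<le> t" by linarith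
    then show ?thesis
    proof cases
      case 3
      then show ?thesis using assms by (simp add: hat_def divide_simps) (simp add: algebra_simps)
    qed (use assms in \<open>auto simp: hat_def\<close>)
  qed
  finally show ?thesis unfolding K_def .
qed

lemma theta_times_peak_height:
  assumes "a < s" "s < c"
  shows "((x s - x a) * (c - s) - (x c - x s) * (s - a)) / sqrt ((s - a) * (c - s) * (c - a))
      * sqrt ((s - a) * (c - s) / (c - a)) = x s - chord x a c s"
proof -
  have "(s - a) * (c - s) * (c - a) / (c - a)\<^sup>2 = (s - a) * (c - s) / (c - a)"
    using assms by (simp add: power2_eq_square)
  then have "sqrt ((s - a) * (c - s) / (c - a)) = sqrt ((s - a) * (c - s) * (c - a)) / (c - a)"
    using assms by (simp add: div_eq_sqrt_div_square)
  moreover have "sqrt ((s - a) * (c - s) * (c - a)) > 0" using assms by simp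
  ultimately show ?thesis using assms by (simp add: chord_def field_simps)
qed

lemma finitely_refining_partition:
  assumes "finitely_refining \<pi>"
  shows "finite (\<pi> n)" "0 \<in> \<pi> n" "1 \<in> \<pi> n" "\<pi> n \<subseteq> {0..1}"
  using assms unfolding finitely_refining_def is_partition_def by auto

lemma finitely_refining_mono:
  assumes "finitely_refining \<pi>" "m \<le> n"
  shows "\<pi> m \<subseteq> \<pi> n"
proof -
  have "\<pi> n \<subseteq> \<pi> (Suc n)" for n using assms(1) unfolding finitely_refining_def by auto
  then show ?thesis using assms(2) by (rule lift_Suc_mono_le)
qed

lemma new_point_neighbours:
  assumes fr: "finitely_refining \<pi>" and s: "s \<in> \<pi> (Suc m) - \<pi> m"
  shows "0 \<le> pred_pt (\<pi> m) s" "pred_pt (\<pi> m) s < s" "s < succ_pt (\<pi> (Suc m)) s"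
proof -
  note P = finitely_refining_partition[OF fr]
  have "s \<in> {0..1}" "s \<noteq> 0" "s \<noteq> 1" using P[of m] P[of "Suc m"] s by auto
  then have "0 < s" "s < 1" by auto
  show "0 \<le> pred_pt (\<pi> m) s" using pred_pt_in[OF P(1,2)[of m] \<open>0 < s\<close>] P(4)[of m] by auto
  show "pred_pt (\<pi> m) s < s" by (rule pred_pt_less[OF P(1,2)[of m] \<open>0 < s\<close>])
  show "s < succ_pt (\<pi> (Suc m)) s" by (rule succ_pt_greater[OF P(1,3)[of "Suc m"] \<open>s < 1\<close>])
qed

definition schauder_at :: "(nat \<Rightarrow> real set) \<Rightarrow> nat \<Rightarrow> real \<Rightarrow> real \<Rightarrow> real" where
  "schauder_at \<pi> m s = schauder (pred_pt (\<pi> m) s) s (succ_pt (\<pi> (Suc m)) s)"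

lemma schauder_fun_eq_schauder_at: "schauder_fun \<pi> enum m k = schauder_at \<pi> m (enum m k)"
  unfolding schauder_fun_def schauder_at_def tk1_def tk2_def tk3_def pt1_def pt3_def
    pred_pt_def succ_pt_def ..

lemma schauder_at_eq_hat:
  assumes fr: "finitely_refining \<pi>" and s: "s \<in> \<pi> (Suc m) - \<pi> m" and t: "0 \<le> t"
  defines "a \<equiv> pred_pt (\<pi> m) s" and "c \<equiv> succ_pt (\<pi> (Suc m)) s"
  shows "schauder_at \<pi> m s t = sqrt ((s - a) * (c - s) / (c - a)) * hat a s c t"
  unfolding schauder_at_def a_def c_def using new_point_neighbours[OF fr s] t
  by (intro schauder_eq_hat) auto

lemma theta_mul_schauder_fun:
  assumes fr: "finitely_refining \<pi>" and new: "enum m k \<in> \<pi> (Suc m) - \<pi> m" and t: "0 \<le> t"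
  defines "a \<equiv> pred_pt (\<pi> m) (enum m k)" and "c \<equiv> succ_pt (\<pi> (Suc m)) (enum m k)"
  shows "theta x \<pi> enum m k * schauder_fun \<pi> enum m k t =
    (x (enum m k) - chord x a c (enum m k)) * hat a (enum m k) c t"
proof -
  define s where "s = enum m k"
  have "theta x \<pi> enum m k * schauder_fun \<pi> enum m k t =
    (((x s - x a) * (c - s) - (x c - x s) * (s - a)) / sqrt ((s - a) * (c - s) * (c - a))
      * sqrt ((s - a) * (c - s) / (c - a))) * hat a s c t"
    unfolding schauder_fun_eq_schauder_at schauder_at_eq_hat[OF fr new t]
    unfolding theta_def tk1_def tk2_def tk3_def pt1_def pt3_def a_def c_def s_def
      pred_pt_def[symmetric] succ_pt_def[symmetric] Let_def
    by (simp only: mult.assoc)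
  also have "\<dots> = (x s - chord x a c s) * hat a s c t"
    using theta_times_peak_height[of a s c x] new_point_neighbours[OF fr new]
    unfolding a_def c_def s_def by simp
  finally show ?thesis unfolding s_def .
qed

lemma schauder_partial_theta:
  assumes fr: "finitely_refining \<pi>"
    and bij: "\<And>m. bij_betw (enum m) {..<level_count \<pi> m} (\<pi> (Suc m) - \<pi> m)"
    and t: "t \<in> {0..1}"
  shows "schauder_partial x \<pi> enum (theta x \<pi> enum) N t = pl_interp x (\<pi> N) t"
proof (induction N)
  case 0
  have "\<pi> 0 = {0, 1}" using fr unfolding finitely_refining_def by auto
  moreover have "consecutive {0, 1} 0 1" unfolding consecutive_def by auto
  ultimately show ?case
    using pl_interp_consecutive[of "{0, 1}" 0 1 t x] t by (simp add: schauder_partial_def chord_def)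
next
  case (Suc N)
  let ?T = "\<lambda>s. (x s - chord x (pred_pt (\<pi> N) s) (succ_pt (\<pi> (Suc N)) s) s)
      * hat (pred_pt (\<pi> N) s) s (succ_pt (\<pi> (Suc N)) s) t"
  have "(\<Sum>k<level_count \<pi> N. theta x \<pi> enum N k * schauder_fun \<pi> enum N k t)
      = (\<Sum>k<level_count \<pi> N. ?T (enum N k))"
    using theta_mul_schauder_fun[where enum = enum and m = N, OF fr] bij_betwE[OF bij] t
    by (intro sum.cong) auto
  also have "\<dots> = (\<Sum>s\<in>\<pi> (Suc N) - \<pi> N. ?T s)"
    by (rule sum.reindex_bij_betw[OF bij])
  also have "pl_interp x (\<pi> N) t + \<dots> = pl_interp x (\<pi> (Suc N)) t"
    using finitely_refining_partition[OF fr] finitely_refining_mono[OF fr, of N "Suc N"] t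
    by (intro pl_interp_refine[symmetric]) auto
  finally show ?case using Suc by (simp add: schauder_partial_def)
qed

lemma schauder_at_vanishes_coarse:
  assumes fr: "finitely_refining \<pi>" and s: "s \<in> \<pi> (Suc m) - \<pi> m" and t: "t \<in> \<pi> m"
  shows "schauder_at \<pi> m s t = 0"
proof -
  note P = finitely_refining_partition[OF fr]
  have "t \<in> \<pi> (Suc m)" using t finitely_refining_mono[OF fr, of m "Suc m"] by auto
  then have "t \<le> pred_pt (\<pi> m) s \<or> succ_pt (\<pi> (Suc m)) s \<le> t"
    using pred_pt_greatest[OF P(1) t] succ_pt_least[OF P(1)] s t
    by (metis DiffD2 linorder_neqE_linordered_idom)
  moreover have "0 \<le> t" using P(4)[of m] t by auto
  ultimately show ?thesis by (simp add: schauder_at_eq_hat[OF fr s] hat_def)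
qed

lemma schauder_at_vanishes_right:
  assumes fr: "finitely_refining \<pi>" and s: "s \<in> \<pi> (Suc m) - \<pi> m"
    and t: "t \<in> \<pi> (Suc m)" "s < t"
  shows "schauder_at \<pi> m s t = 0"
proof -
  note P = finitely_refining_partition[OF fr]
  have "succ_pt (\<pi> (Suc m)) s \<le> t" using succ_pt_least[OF P(1) t] .
  moreover have "0 \<le> t" using P(4)[of "Suc m"] t by auto
  ultimately show ?thesis by (simp add: schauder_at_eq_hat[OF fr s] hat_def)
qed

lemma schauder_at_peak_pos:
  assumes fr: "finitely_refining \<pi>" and s: "s \<in> \<pi> (Suc m) - \<pi> m"
  shows "schauder_at \<pi> m s s > 0"
  using new_point_neighbours[OF fr s] by (simp add: schauder_at_eq_hat[OF fr s] hat_def)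

lemma schauder_level_independent:
  assumes fr: "finitely_refining \<pi>"
    and bij: "bij_betw (enum m) {..<level_count \<pi> m} (\<pi> (Suc m) - \<pi> m)"
    and zero: "\<And>t. t \<in> \<pi> (Suc m) \<Longrightarrow> (\<Sum>k<level_count \<pi> m. d k * schauder_fun \<pi> enum m k t) = 0"
  shows "\<forall>k<level_count \<pi> m. d k = 0"
proof (rule ccontr)
  assume "\<not> (\<forall>k<level_count \<pi> m. d k = 0)"
  \<comment> \<open>Evaluate at the rightmost new point with a nonzero coefficient: all other Schauder
    functions with nonzero coefficient are centred to its left and vanish there.\<close>
  define K where "K = {k \<in> {..<level_count \<pi> m}. d k \<noteq> 0}"
  have fin: "finite (enum m ` K)" and "enum m ` K \<noteq> {}"
    using \<open>\<not> _\<close> unfolding K_def by auto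
  then have "Max (enum m ` K) \<in> enum m ` K" by (rule Max_in)
  then obtain k0 where "k0 \<in> K" "enum m k0 = Max (enum m ` K)" by (auto elim!: imageE)
  then have k0: "k0 < level_count \<pi> m" "d k0 \<noteq> 0" "\<And>k. k \<in> K \<Longrightarrow> enum m k \<le> enum m k0"
    using Max_ge[OF fin] unfolding K_def by auto
  let ?s0 = "enum m k0"
  have new: "enum m k \<in> \<pi> (Suc m) - \<pi> m" if "k < level_count \<pi> m" for k
    using bij_betwE[OF bij] that by blast
  have inj: "inj_on (enum m) {..<level_count \<pi> m}" using bij by (rule bij_betw_imp_inj_on)
  have "\<forall>k\<in>{..<level_count \<pi> m} - {k0}. d k * schauder_at \<pi> m (enum m k) ?s0 = 0"
  proof
    fix k assume k: "k \<in> {..<level_count \<pi> m} - {k0}"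
    show "d k * schauder_at \<pi> m (enum m k) ?s0 = 0"
    proof (cases "d k = 0")
      case False
      then have "enum m k < ?s0" using k0(1) k0(3)[of k] k inj unfolding K_def inj_on_def by force
      with k show ?thesis using schauder_at_vanishes_right[OF fr new] new[OF k0(1)] by simp
    qed simp
  qed
  then have "(\<Sum>k\<in>{..<level_count \<pi> m} - {k0}. d k * schauder_at \<pi> m (enum m k) ?s0) = 0"
    by (rule sum.neutral)
  moreover have "(\<Sum>k<level_count \<pi> m. d k * schauder_at \<pi> m (enum m k) ?s0)
      = d k0 * schauder_at \<pi> m ?s0 ?s0
        + (\<Sum>k\<in>{..<level_count \<pi> m} - {k0}. d k * schauder_at \<pi> m (enum m k) ?s0)"
    by (rule sum.remove) (use k0 in auto)
  moreover have "d k0 * schauder_at \<pi> m ?s0 ?s0 \<noteq> 0"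
    using schauder_at_peak_pos[OF fr new[OF k0(1)]] k0(2) by simp
  ultimately show False
    using zero[of ?s0] new[OF k0(1)] by (simp add: schauder_fun_eq_schauder_at)
qed

lemma schauder_partial_on_partition:
  assumes fr: "finitely_refining \<pi>"
    and bij: "\<And>m. bij_betw (enum m) {..<level_count \<pi> m} (\<pi> (Suc m) - \<pi> m)"
    and lim: "(\<lambda>N. schauder_partial x \<pi> enum c N t) \<longlonglongrightarrow> y" and t: "t \<in> \<pi> n"
  shows "schauder_partial x \<pi> enum c n t = y"
proof -
  have "schauder_partial x \<pi> enum c N t = schauder_partial x \<pi> enum c n t" if "n \<le> N" for N
    using that
  proof (induction rule: dec_induct)
    case (step N)
    have "t \<in> \<pi> N" using t finitely_refining_mono[OF fr step.hyps(1)] by auto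
    then have "(\<Sum>k<level_count \<pi> N. c N k * schauder_fun \<pi> enum N k t) = 0"
      using schauder_at_vanishes_coarse[OF fr _ \<open>t \<in> \<pi> N\<close>] bij_betwE[OF bij]
      by (intro sum.neutral) (auto simp: schauder_fun_eq_schauder_at)
    then show ?case using step.IH by (simp add: schauder_partial_def)
  qed simp
  then have "eventually (\<lambda>N. schauder_partial x \<pi> enum c N t = schauder_partial x \<pi> enum c n t)
      sequentially"
    unfolding eventually_sequentially by blast
  then have "(\<lambda>N. schauder_partial x \<pi> enum c N t) \<longlonglongrightarrow> schauder_partial x \<pi> enum c n t"
    by (rule tendsto_eventually)
  then show ?thesis using lim by (rule LIMSEQ_unique)
qed

lemma schauder_coefficients_unique:
  assumes fr: "finitely_refining \<pi>"
    and bij: "\<And>m. bij_betw (enum m) {..<level_count \<pi> m} (\<pi> (Suc m) - \<pi> m)"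
    and lim: "\<forall>t\<in>{0..1}. (\<lambda>N. schauder_partial x \<pi> enum c N t) \<longlonglongrightarrow> x t"
  shows "\<forall>k<level_count \<pi> m. c m k = theta x \<pi> enum m k"
proof (induction m rule: less_induct)
  case (less m)
  let ?S = "\<lambda>c N t. schauder_partial x \<pi> enum c N t"
  have lower: "?S c m t = ?S (theta x \<pi> enum) m t" for t
    unfolding schauder_partial_def using less by (intro arg_cong2[where f="(+)"] sum.cong) auto
  have "(\<Sum>k<level_count \<pi> m. (c m k - theta x \<pi> enum m k) * schauder_fun \<pi> enum m k t) = 0"
    if t: "t \<in> \<pi> (Suc m)" for t
  proof -
    have "t \<in> {0..1}" using t finitely_refining_partition(4)[OF fr, of "Suc m"] by auto
    then have "?S c (Suc m) t = ?S (theta x \<pi> enum) (Suc m) t"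
      using schauder_partial_on_partition[OF fr bij _ t] lim schauder_partial_theta[OF fr bij]
        pl_interp_in[OF finitely_refining_partition(1)[OF fr] t] by simp
    then show ?thesis
      using lower[of t] by (simp add: schauder_partial_def left_diff_distrib sum_subtractf)
  qed
  then show ?case
    using schauder_level_independent[where d = "\<lambda>k. c m k - theta x \<pi> enum m k"
        and enum = enum and m = m, OF fr bij]
    by simp
qed

theorem mainTheorem3:
  fixes \<pi> :: "nat \<Rightarrow> real set" and x :: "real \<Rightarrow> real" and enum :: "nat \<Rightarrow> nat \<Rightarrow> real"
  assumes "finitely_refining \<pi>"
    and "continuous_on {0..1} x"
    and "\<And>m. bij_betw (enum m) {..<level_count \<pi> m} (\<pi> (Suc m) - \<pi> m)"
  shows "uniform_limit {0..1} (schauder_partial x \<pi> enum (theta x \<pi> enum)) x sequentially \<and>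
         (\<forall>\<theta>'. (\<forall>t\<in>{0..1}. (\<lambda>N. schauder_partial x \<pi> enum \<theta>' N t) \<longlonglongrightarrow> x t) \<longrightarrow>
           (\<forall>m. \<forall>k<level_count \<pi> m. \<theta>' m k = theta x \<pi> enum m k))"
proof (intro conjI allI impI)
  have "uniform_limit {0..1} (\<lambda>N. pl_interp x (\<pi> N)) x sequentially"
    using assms(1,2) by (intro uniform_limit_pl_interp) (auto simp: finitely_refining_def)
  moreover have "uniform_limit {0..1} (schauder_partial x \<pi> enum (theta x \<pi> enum)) x sequentially
      \<longleftrightarrow> uniform_limit {0..1} (\<lambda>N. pl_interp x (\<pi> N)) x sequentially"
    by (rule uniform_limit_cong') (simp_all add: schauder_partial_theta[OF assms(1,3)])
  ultimately show "uniform_limit {0..1} (schauder_partial x \<pi> enum (theta x \<pi> enum)) x sequentially"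
    by simp
qed (use schauder_coefficients_unique[OF assms(1,3)] in blast)

end
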